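(* Let $n\geq 3$ and let $\mathcal{T}'\subseteq\mathcal{T}_n$ be such that for every $T\in\mathcal{T}_n$ there exists $T'\in\mathcal{T}'$ with $T\rhd T'$. Then $\chi(\mathrm{KG}(\mathcal{T}'))=n-2$.
   Context: Label the vertices of a convex $n$-gon by $1,\dots,n$ in cyclic order; $\mathrm{Diag}_n = \{\{i,j\} \subseteq [n]: i-j\not\equiv \pm1 \pmod n\}$; two diagonals cross if they meet in the interior of the polygon (their four endpoints are distinct and interleave cyclically). A triangulation is identified with its set of diagonals, and $\mathcal{T}_n$ is the set of triangulations. For a set system $\mathcal{F}$, $\mathrm{KG}(\mathcal{F})$ is the graph on $\mathcal{F}$ with $F,F'$ adjacent iff $F\cap F'=\emptyset$. Swapping relation: for $\{i,j\},\{i',j'\}\in\mathrm{Diag}_n$ written with $i<j$ and $i'<j'$, write $\{i,j\}\rhd\{i',j'\}$ if either $\{i,j\}$ and $\{i',j'\}$ do not cross (in particular $d\rhd d$ for every $d$), or $i'<i<j'<j<n$ and $j'-i>1$. For $T,T'\in\mathcal{T}_n$, write $T\rhd T'$ if $d\rhd d'$ for all $d\in T$ and $d'\in T'$. *)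

theory Defs
  imports Main
begin

text \<open>Vertices of the convex n-gon are 1..n in cyclic order; diagonals are 2-subsets.\<close>

definition Diag :: "nat \<Rightarrow> nat set set" where
  "Diag n = {{i, j} | i j. i \<in> {1..n} \<and> j \<in> {1..n} \<and> i \<noteq> j \<and>
      (int i - int j) mod int n \<noteq> 1 mod int n \<and>
      (int i - int j) mod int n \<noteq> (-1) mod int n}"

definition crosses :: "nat set \<Rightarrow> nat set \<Rightarrow> bool" where
  "crosses d d' \<longleftrightarrow> (\<exists>i j i' j'. d = {i, j} \<and> i < j \<and> d' = {i', j'} \<and> i' < j' \<and>
      ((i < i' \<and> i' < j \<and> j < j') \<or> (i' < i \<and> i < j' \<and> j' < j)))"

definition triangulations :: "nat \<Rightarrow> nat set set set" where
  "triangulations n = {T. T \<subseteq> Diag n \<and> (\<forall>d\<in>T. \<forall>d'\<in>T. \<not> crosses d d') \<and>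
      (\<forall>d\<in>Diag n. (\<forall>d'\<in>T. \<not> crosses d d') \<longrightarrow> d \<in> T)}"

definition swap_diag :: "nat \<Rightarrow> nat set \<Rightarrow> nat set \<Rightarrow> bool" where
  "swap_diag n d d' \<longleftrightarrow> \<not> crosses d d' \<or>
     (\<exists>i j i' j'. d = {i, j} \<and> i < j \<and> d' = {i', j'} \<and> i' < j' \<and>
        i' < i \<and> i < j' \<and> j' < j \<and> j < n \<and> j' - i > 1)"

definition swap_triang :: "nat \<Rightarrow> nat set set \<Rightarrow> nat set set \<Rightarrow> bool" where
  "swap_triang n T T' \<longleftrightarrow> (\<forall>d\<in>T. \<forall>d'\<in>T'. swap_diag n d d')"

definition KG_adj :: "'a set set \<Rightarrow> 'a set \<Rightarrow> 'a set \<Rightarrow> bool" where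
  "KG_adj \<F> F F' \<longleftrightarrow> F \<in> \<F> \<and> F' \<in> \<F> \<and> F \<noteq> F' \<and> F \<inter> F' = {}"

definition proper_coloring :: "'a set set \<Rightarrow> ('a set \<Rightarrow> nat) \<Rightarrow> nat \<Rightarrow> bool" where
  "proper_coloring \<F> c k \<longleftrightarrow> (\<forall>F\<in>\<F>. c F < k) \<and>
     (\<forall>F F'. KG_adj \<F> F F' \<longrightarrow> c F \<noteq> c F')"

definition chromatic_number_KG :: "'a set set \<Rightarrow> nat" where
  "chromatic_number_KG \<F> = (LEAST k. \<exists>c. proper_coloring \<F> c k)"

end

(*
  Upper bound: colour a triangulation T by x - 3, where x is the least vertex x \<ge> 3 with
  {1, x} \<in> T (and x = n if there is none). Two triangulations of the same colour share the
  diagonal {1, x}, or, if they have no diagonal at 1, both contain {2, n}; so disjoint ones get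
  different colours.

  Lower bound: call two triangulations swap-blocked if no diagonal e satisfies d \<rhd> e for all
  their diagonals d. Choosing for every T some T' \<in> \<T>' with T \<rhd> T' maps blocked triangulations
  to disjoint, i.e. adjacent, vertices of KG(\<T>'), so it suffices that the blocking graph on the
  triangulations of an m-gon needs m - 2 colours. Induct on m: view the m-gon as the vertices
  2, ..., m+1 of an (m+1)-gon and extend each triangulation S in two ways, by the diagonal from
  the new vertex 1 to the apex of the triangle of S on the side {2, m+1}, and by the ear
  {2, m+1}; together with a triangulation containing the fan at 1, blocked pairs stay blocked
  (a common swap target upstairs contracts to one downstairs), which turns a colouring of the
  (m+1)-gon's blocking graph into one of the m-gon's with one colour less.
*)

theory Submission
  imports Defs
begin

lemma doubleton_eq_ordered:
  fixes a b c d :: nat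
  assumes "{a, b} = {c, d}" "a < b" "c < d"
  shows "a = c \<and> b = d"
  using assms by (metis doubleton_eq_iff less_asym)

lemma crosses_iff:
  fixes i j i' j' :: nat
  assumes "i < j" "i' < j'"
  shows "crosses {i, j} {i', j'} \<longleftrightarrow>
    (i < i' \<and> i' < j \<and> j < j') \<or> (i' < i \<and> i < j' \<and> j' < j)"
proof
  assume "crosses {i, j} {i', j'}"
  then obtain a b a' b' where "{i, j} = {a, b}" "a < b" "{i', j'} = {a', b'}" "a' < b'"
    "(a < a' \<and> a' < b \<and> b < b') \<or> (a' < a \<and> a < b' \<and> b' < b)"
    unfolding crosses_def by blast
  then show "(i < i' \<and> i' < j \<and> j < j') \<or> (i' < i \<and> i < j' \<and> j' < j)"
    using doubleton_eq_ordered assms by metis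
qed (use assms in \<open>auto simp: crosses_def\<close>)

lemma swap_diag_iff:
  fixes i j i' j' :: nat
  assumes "i < j" "i' < j'"
  shows "swap_diag n {i, j} {i', j'} \<longleftrightarrow> \<not> crosses {i, j} {i', j'} \<or>
    (i' < i \<and> i < j' \<and> j' < j \<and> j < n \<and> j' - i > 1)"
proof
  assume "swap_diag n {i, j} {i', j'}"
  then consider "\<not> crosses {i, j} {i', j'}"
    | a b a' b' where "{i, j} = {a, b}" "a < b" "{i', j'} = {a', b'}" "a' < b'"
      "a' < a" "a < b'" "b' < b" "b < n" "b' - a > 1"
    unfolding swap_diag_def by blast
  then show "\<not> crosses {i, j} {i', j'} \<or> (i' < i \<and> i < j' \<and> j' < j \<and> j < n \<and> j' - i > 1)"
    by cases (use doubleton_eq_ordered assms in metis)+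
qed (use assms in \<open>auto simp: swap_diag_def\<close>)

lemma crosses_sym: "crosses d d' \<Longrightarrow> crosses d' d"
  unfolding crosses_def by blast

lemma not_crosses_self: "\<not> crosses d d"
  unfolding crosses_def by (metis doubleton_eq_ordered less_asym)

lemma swap_diag_if_not_crosses: "\<not> crosses d e \<Longrightarrow> swap_diag n d e"
  unfolding swap_diag_def by blast

lemma not_swap_diag_if_crosses:
  fixes i j i' j' :: nat
  assumes "crosses {i, j} {i', j'}" "i < j" "i' < j'" "i < i' \<or> j = n"
  shows "\<not> swap_diag n {i, j} {i', j'}"
  using assms by (auto simp: swap_diag_iff)

lemma Diag_iff:
  assumes "n \<ge> 3"
  shows "d \<in> Diag n \<longleftrightarrow>
    (\<exists>i j. d = {i, j} \<and> 1 \<le> i \<and> i + 2 \<le> j \<and> j \<le> n \<and> \<not> (i = 1 \<and> j = n))"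
proof -
  have one: "1 mod int n = 1" and minus_one: "(-1) mod int n = int n - 1"
    using assms by (simp_all add: zmod_minus1)
  have mod_neg: "(int i - int j) mod int n = int n + int i - int j"
    and mod_pos: "(int j - int i) mod int n = int j - int i"
    if "1 \<le> i" "i < j" "j \<le> n" for i j
  proof -
    have "(int i - int j) mod int n = (int n + int i - int j) mod int n"
      by (metis add_diff_eq mod_add_self1)
    then show "(int i - int j) mod int n = int n + int i - int j"
      using that by simp
    show "(int j - int i) mod int n = int j - int i"
      using that by simp
  qed
  show ?thesis
  proof
    assume "d \<in> Diag n"
    then obtain i j where ij: "d = {i, j}" "i \<in> {1..n}" "j \<in> {1..n}" "i \<noteq> j"
      "(int i - int j) mod int n \<noteq> 1 mod int n" "(int i - int j) mod int n \<noteq> (-1) mod int n"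
      unfolding Diag_def by blast
    show "\<exists>i j. d = {i, j} \<and> 1 \<le> i \<and> i + 2 \<le> j \<and> j \<le> n \<and> \<not> (i = 1 \<and> j = n)"
    proof (cases "i < j")
      case True
      then show ?thesis
        using ij mod_neg[of i j] one minus_one by (intro exI[of _ i] exI[of _ j]) auto
    next
      case False
      then have "j < i" using ij(4) by simp
      then show ?thesis
        using ij mod_pos[of j i] one minus_one
        by (intro exI[of _ j] exI[of _ i]) (auto simp: insert_commute)
    qed
  next
    assume "\<exists>i j. d = {i, j} \<and> 1 \<le> i \<and> i + 2 \<le> j \<and> j \<le> n \<and> \<not> (i = 1 \<and> j = n)"
    then obtain i j where ij: "d = {i, j}" "1 \<le> i" "i + 2 \<le> j" "j \<le> n" "\<not> (i = 1 \<and> j = n)"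
      by blast
    have "(int i - int j) mod int n \<noteq> 1 mod int n" "(int i - int j) mod int n \<noteq> (-1) mod int n"
      using ij mod_neg[of i j] one minus_one by auto
    moreover have "i \<in> {1..n}" "j \<in> {1..n}" "i \<noteq> j"
      using ij by auto
    ultimately show "d \<in> Diag n"
      unfolding Diag_def using ij(1) by blast
  qed
qed

lemma Diag_cases:
  assumes "n \<ge> 3" "d \<in> Diag n"
  obtains i j where "d = {i, j}" "1 \<le> i" "i + 2 \<le> j" "j \<le> n" "\<not> (i = 1 \<and> j = n)"
  using assms(2) unfolding Diag_iff[OF assms(1)] by blast

lemma doubleton_in_Diag:
  assumes "1 \<le> i" "i + 2 \<le> j" "j \<le> n" "\<not> (i = 1 \<and> j = n)"
  shows "{i, j} \<in> Diag n"
proof -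
  have "n \<ge> 3" using assms by simp
  then show ?thesis
    unfolding Diag_iff[OF \<open>n \<ge> 3\<close>] using assms by blast
qed

lemma finite_Diag: "finite (Diag n)"
proof -
  have "Diag n \<subseteq> (\<lambda>(i, j). {i, j}) ` ({1..n} \<times> {1..n})"
    unfolding Diag_def by auto
  then show ?thesis
    by (rule finite_subset) auto
qed

definition noncrossing :: "nat set set \<Rightarrow> bool" where
  "noncrossing X \<longleftrightarrow> (\<forall>d\<in>X. \<forall>d'\<in>X. \<not> crosses d d')"

lemma noncrossing_insert:
  "noncrossing X \<Longrightarrow> (\<And>d. d \<in> X \<Longrightarrow> \<not> crosses e d) \<Longrightarrow> noncrossing (insert e X)"
  unfolding noncrossing_def by (auto dest: crosses_sym simp: not_crosses_self)

lemma triangulationsD: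
  assumes "T \<in> triangulations n"
  shows "T \<subseteq> Diag n" "noncrossing T"
    and "d \<in> Diag n \<Longrightarrow> (\<And>d'. d' \<in> T \<Longrightarrow> \<not> crosses d d') \<Longrightarrow> d \<in> T"
  using assms unfolding triangulations_def noncrossing_def by auto

lemma noncrossing_extends_to_triangulation:
  assumes "X \<subseteq> Diag n" "noncrossing X"
  obtains T where "T \<in> triangulations n" "X \<subseteq> T"
proof -
  define A where "A = {Y. X \<subseteq> Y \<and> Y \<subseteq> Diag n \<and> noncrossing Y}"
  have "finite A"
    unfolding A_def by (rule finite_subset[of _ "Pow (Diag n)"]) (auto simp: finite_Diag)
  moreover have "X \<in> A"
    using assms unfolding A_def by blast
  ultimately obtain T where "T \<in> A" and maximal: "\<forall>Y\<in>A. T \<subseteq> Y \<longrightarrow> Y = T"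
    using finite_has_maximal2 by metis
  then have T: "X \<subseteq> T" "T \<subseteq> Diag n" "noncrossing T"
    unfolding A_def by auto
  have "T \<in> triangulations n"
    unfolding triangulations_def
  proof (intro CollectI conjI ballI impI)
    fix d assume d: "d \<in> Diag n" "\<forall>d'\<in>T. \<not> crosses d d'"
    have "noncrossing (insert d T)"
      using T d(2) by (intro noncrossing_insert) auto
    then have "insert d T \<in> A"
      using T d(1) unfolding A_def by blast
    then show "d \<in> T"
      using maximal by blast
  qed (use T in \<open>auto simp: noncrossing_def\<close>)
  then show ?thesis
    using that T by blast
qed

lemma triangulations_nonempty: "triangulations n \<noteq> {}"
  using noncrossing_extends_to_triangulation[of "{}" n] by (auto simp: noncrossing_def)

lemma Diag_3: "Diag 3 = {}"
proof -
  have "d \<notin> Diag 3" for d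
  proof
    assume "d \<in> Diag 3"
    then show False
      by (rule Diag_cases[rotated]) auto
  qed
  then show ?thesis
    by blast
qed

lemma triangulations_3: "T \<in> triangulations 3 \<Longrightarrow> T = {}"
  using triangulationsD(1) Diag_3 by blast

lemma triangulation_nonempty:
  assumes "n \<ge> 4" "T \<in> triangulations n"
  shows "T \<noteq> {}"
proof
  assume "T = {}"
  moreover have "{1, 3} \<in> Diag n"
    using assms(1) by (intro doubleton_in_Diag) auto
  ultimately show False
    using triangulationsD(3)[OF assms(2)] by blast
qed

lemma doubleton_2_n_in_triangulation:
  assumes "n \<ge> 4" "T \<in> triangulations n"
    and no_fan: "\<And>x. 3 \<le> x \<Longrightarrow> x < n \<Longrightarrow> {1, x} \<notin> T"
  shows "{2, n} \<in> T"
proof (rule triangulationsD(3)[OF assms(2)])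
  show "{2, n} \<in> Diag n"
    using assms(1) by (intro doubleton_in_Diag) auto
  fix d assume "d \<in> T"
  then have "d \<in> Diag n"
    using triangulationsD(1)[OF assms(2)] by blast
  then obtain i j where d: "d = {i, j}" "1 \<le> i" "i + 2 \<le> j" "j \<le> n"
    by (rule Diag_cases[rotated]) (use assms(1) in auto)
  show "\<not> crosses {2, n} d"
  proof
    assume "crosses {2, n} d"
    then have "i = 1" "3 \<le> j" "j < n"
      using d assms(1) by (auto simp: crosses_iff)
    then show False
      using no_fan[of j] \<open>d \<in> T\<close> d(1) by simp
  qed
qed

definition first_neighbour :: "nat set set \<Rightarrow> nat \<Rightarrow> nat \<Rightarrow> nat \<Rightarrow> nat" where
  "first_neighbour T v a b = (LEAST x. a \<le> x \<and> ({v, x} \<in> T \<or> x = b))"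

lemma first_neighbour_bounds:
  "a \<le> b \<Longrightarrow> a \<le> first_neighbour T v a b \<and> first_neighbour T v a b \<le> b"
  unfolding first_neighbour_def by (metis (mono_tags, lifting) LeastI Least_le)

lemma first_neighbour_mem:
  "a \<le> b \<Longrightarrow> first_neighbour T v a b < b \<Longrightarrow> {v, first_neighbour T v a b} \<in> T"
  unfolding first_neighbour_def by (metis (mono_tags, lifting) LeastI less_irrefl)

lemma first_neighbour_least:
  "a \<le> x \<Longrightarrow> x < first_neighbour T v a b \<Longrightarrow> {v, x} \<notin> T"
  unfolding first_neighbour_def using not_less_Least by blast

lemma proper_coloring_first_neighbour:
  assumes "n \<ge> 3" "Tp \<subseteq> triangulations n"
  shows "proper_coloring Tp (\<lambda>T. first_neighbour T 1 3 n - 3) (n - 2)"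
  unfolding proper_coloring_def
proof (intro conjI ballI allI impI)
  fix T assume "T \<in> Tp"
  show "first_neighbour T 1 3 n - 3 < n - 2"
    using first_neighbour_bounds[of 3 n T 1] assms(1) by linarith
next
  fix T T' assume "KG_adj Tp T T'"
  then have T: "T \<in> triangulations n" "T' \<in> triangulations n" "T \<noteq> T'" "T \<inter> T' = {}"
    using assms(2) unfolding KG_adj_def by auto
  let ?a = "first_neighbour T 1 3 n" and ?a' = "first_neighbour T' 1 3 n"
  show "?a - 3 \<noteq> ?a' - 3"
  proof
    assume "?a - 3 = ?a' - 3"
    then have same: "?a' = ?a"
      using first_neighbour_bounds[of 3 n T 1] first_neighbour_bounds[of 3 n T' 1] assms(1)
      by linarith
    have "\<exists>d. d \<in> T \<and> d \<in> T'"
    proof (cases "?a < n")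
      case True
      then show ?thesis
        using first_neighbour_mem[of 3 n T 1] first_neighbour_mem[of 3 n T' 1] assms(1) same
        by auto
    next
      case False
      then have "?a = n" "?a' = n"
        using first_neighbour_bounds[of 3 n T 1] assms(1) same by linarith+
      moreover have "n \<ge> 4"
        using T triangulations_3 assms(1) by (cases "n = 3") auto
      ultimately have "{2, n} \<in> T" "{2, n} \<in> T'"
        using first_neighbour_least[of 3 _ T 1 n] first_neighbour_least[of 3 _ T' 1 n]
        by (auto intro!: doubleton_2_n_in_triangulation T(1,2))
      then show ?thesis
        by blast
    qed
    then show False
      using T(4) by blast
  qed
qed

definition colorable :: "('a \<Rightarrow> 'a \<Rightarrow> bool) \<Rightarrow> 'a set \<Rightarrow> nat \<Rightarrow> bool" where
  "colorable R V k \<longleftrightarrow> (\<exists>c. (\<forall>x\<in>V. c x < k) \<and> (\<forall>x\<in>V. \<forall>y\<in>V. R x y \<longrightarrow> c x \<noteq> c y))"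

lemma colorable_if_proper_coloring: "proper_coloring F c k \<Longrightarrow> colorable (KG_adj F) F k"
  unfolding proper_coloring_def colorable_def by blast

lemma colorable_pos: "colorable R V k \<Longrightarrow> V \<noteq> {} \<Longrightarrow> 0 < k"
  unfolding colorable_def by fastforce

lemma colorable_pullback:
  assumes "colorable G W k" "f ` V \<subseteq> W"
    and "\<And>x y. x \<in> V \<Longrightarrow> y \<in> V \<Longrightarrow> R x y \<Longrightarrow> G (f x) (f y)"
  shows "colorable R V k"
proof -
  obtain c where "\<forall>x\<in>W. c x < k" "\<forall>x\<in>W. \<forall>y\<in>W. G x y \<longrightarrow> c x \<noteq> c y"
    using assms(1) unfolding colorable_def by blast
  moreover have "f x \<in> W" if "x \<in> V" for x
    using assms(2) that by blast
  ultimately have "(\<forall>x\<in>V. c (f x) < k) \<and> (\<forall>x\<in>V. \<forall>y\<in>V. R x y \<longrightarrow> c (f x) \<noteq> c (f y))"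
    using assms(3) by blast
  then show ?thesis
    unfolding colorable_def by (rule exI[of _ "\<lambda>x. c (f x)"])
qed

lemma colorable_omitting_colour:
  assumes "k0 < k" "\<forall>x\<in>V. c x < k \<and> c x \<noteq> k0" "\<forall>x\<in>V. \<forall>y\<in>V. R x y \<longrightarrow> c x \<noteq> c y"
  shows "colorable R V (k - 1)"
proof -
  define c' where "c' x = (if c x < k0 then c x else c x - 1)" for x
  have "\<forall>x\<in>V. c' x < k - 1"
    using assms(1,2) unfolding c'_def by (auto split: if_splits)
  moreover have "\<forall>x\<in>V. \<forall>y\<in>V. R x y \<longrightarrow> c' x \<noteq> c' y"
  proof (intro ballI impI)
    fix x y assume "x \<in> V" "y \<in> V" "R x y"
    then have "c x \<noteq> c y" "c x \<noteq> k0" "c y \<noteq> k0"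
      using assms(2,3) by auto
    then show "c' x \<noteq> c' y"
      unfolding c'_def by auto
  qed
  ultimately show ?thesis
    unfolding colorable_def by blast
qed

text \<open>Colour \<open>x\<close> by the colour of \<open>v x\<close>, unless that is the colour of \<open>w\<close>, in which
  case by the colour of \<open>s x\<close>.\<close>

lemma colorable_minus_one:
  assumes "colorable G W k" "v ` V \<subseteq> W" "s ` V \<subseteq> W" "w \<in> W"
    and vv: "\<And>x y. x \<in> V \<Longrightarrow> y \<in> V \<Longrightarrow> R x y \<Longrightarrow> G (v x) (v y)"
    and vs: "\<And>x y. x \<in> V \<Longrightarrow> y \<in> V \<Longrightarrow> R x y \<Longrightarrow> G (v x) (s y)"
    and sw: "\<And>x. x \<in> V \<Longrightarrow> G (s x) w"
    and sym: "\<And>x y. R x y \<Longrightarrow> R y x"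
  shows "colorable R V (k - 1)"
proof -
  obtain c where c_lt: "\<forall>x\<in>W. c x < k" and c_proper: "\<forall>x\<in>W. \<forall>y\<in>W. G x y \<longrightarrow> c x \<noteq> c y"
    using assms(1) unfolding colorable_def by blast
  define c' where "c' x = (if c (v x) \<noteq> c w then c (v x) else c (s x))" for x
  have "\<forall>x\<in>V. c' x < k \<and> c' x \<noteq> c w"
  proof
    fix x assume "x \<in> V"
    then have "c (s x) \<noteq> c w"
      using c_proper sw assms(3,4) by blast
    then show "c' x < k \<and> c' x \<noteq> c w"
      using c_lt assms(2,3) \<open>x \<in> V\<close> unfolding c'_def by auto
  qed
  moreover have "\<forall>x\<in>V. \<forall>y\<in>V. R x y \<longrightarrow> c' x \<noteq> c' y"
  proof (intro ballI impI)
    fix x y assume xy: "x \<in> V" "y \<in> V" "R x y"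
    have "v x \<in> W" "v y \<in> W" "s x \<in> W" "s y \<in> W"
      using assms(2,3) xy(1,2) by auto
    then have "c (v x) \<noteq> c (v y)" "c (v x) \<noteq> c (s y)" "c (v y) \<noteq> c (s x)"
      using c_proper vv[OF xy] vs[OF xy] vs[OF xy(2,1) sym[OF xy(3)]] by auto
    then show "c' x \<noteq> c' y"
      unfolding c'_def by auto
  qed
  moreover have "c w < k"
    using c_lt assms(4) by blast
  ultimately show ?thesis
    using colorable_omitting_colour by blast
qed

definition swap_target :: "nat \<Rightarrow> nat set set \<Rightarrow> nat set \<Rightarrow> bool" where
  "swap_target n X e \<longleftrightarrow> (\<forall>d\<in>X. swap_diag n d e)"

definition swap_blocked :: "nat \<Rightarrow> nat set set \<Rightarrow> nat set set \<Rightarrow> bool" where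
  "swap_blocked n X Y \<longleftrightarrow> X \<noteq> Y \<and> \<not> (\<exists>e\<in>Diag n. swap_target n X e \<and> swap_target n Y e)"

lemma swap_target_antimono: "X \<subseteq> Y \<Longrightarrow> swap_target n Y e \<Longrightarrow> swap_target n X e"
  unfolding swap_target_def by blast

lemma swap_target_if_mem: "noncrossing X \<Longrightarrow> e \<in> X \<Longrightarrow> swap_target n X e"
  unfolding swap_target_def noncrossing_def using swap_diag_if_not_crosses by blast

lemma swap_blocked_sym: "swap_blocked n X Y \<Longrightarrow> swap_blocked n Y X"
  unfolding swap_blocked_def by blast

lemma swap_blockedI:
  assumes "n \<ge> 4" "T \<in> triangulations n"
    and "\<And>e. e \<in> Diag n \<Longrightarrow> swap_target n T e \<Longrightarrow> swap_target n T' e \<Longrightarrow> False"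
  shows "swap_blocked n T T'"
proof -
  obtain e where "e \<in> T"
    using triangulation_nonempty[OF assms(1,2)] by blast
  then have "e \<in> Diag n" "swap_target n T e"
    using triangulationsD(1,2)[OF assms(2)] swap_target_if_mem by auto
  then have "T \<noteq> T'"
    using assms(3) by blast
  then show ?thesis
    unfolding swap_blocked_def using assms(3) by blast
qed

lemma KG_adj_if_swap_blocked:
  assumes "n \<ge> 3" "Tp \<subseteq> triangulations n" "T1 \<in> triangulations n" "T2 \<in> triangulations n"
    and "swap_blocked n T1 T2" "T1' \<in> Tp" "T2' \<in> Tp"
    and "swap_triang n T1 T1'" "swap_triang n T2 T2'"
  shows "KG_adj Tp T1' T2'"
proof -
  have "T1' \<inter> T2' = {}"
  proof (rule ccontr)
    assume "T1' \<inter> T2' \<noteq> {}"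
    then obtain e where "e \<in> T1'" "e \<in> T2'"
      by blast
    moreover have "T1' \<subseteq> Diag n"
      using assms(2,6) triangulationsD(1) by blast
    ultimately have "e \<in> Diag n" "swap_target n T1 e" "swap_target n T2 e"
      using assms(8,9) unfolding swap_triang_def swap_target_def by auto
    then show False
      using assms(5) unfolding swap_blocked_def by blast
  qed
  moreover have "n \<noteq> 3"
    using assms(3-5) triangulations_3 unfolding swap_blocked_def by blast
  then have "T1' \<noteq> {}"
    using assms(1,2,6) triangulation_nonempty[of n T1'] by auto
  ultimately show ?thesis
    unfolding KG_adj_def using assms(6,7) by auto
qed

definition shift_diags :: "nat set set \<Rightarrow> nat set set" where
  "shift_diags S = image Suc ` S"

lemma doubleton_in_shift_diags: "{i, j} \<in> S \<Longrightarrow> {Suc i, Suc j} \<in> shift_diags S"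
  unfolding shift_diags_def by (metis image_empty image_eqI image_insert)

lemma shift_diags_cases:
  assumes "m \<ge> 3" "S \<subseteq> Diag m" "d' \<in> shift_diags S"
  obtains i j where "d' = {Suc i, Suc j}" "{i, j} \<in> S" "1 \<le> i" "i + 2 \<le> j" "j \<le> m"
    "\<not> (i = 1 \<and> j = m)"
proof -
  obtain d where d: "d \<in> S" "d' = Suc ` d"
    using assms(3) unfolding shift_diags_def by blast
  then have "d \<in> Diag m"
    using assms(2) by blast
  then obtain i j where "d = {i, j}" "1 \<le> i" "i + 2 \<le> j" "j \<le> m" "\<not> (i = 1 \<and> j = m)"
    by (rule Diag_cases[OF assms(1)])
  then show ?thesis
    using that d by auto
qed

lemma shift_diags_subset_Diag:
  assumes "m \<ge> 3" "S \<subseteq> Diag m"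
  shows "shift_diags S \<subseteq> Diag (Suc m)"
proof
  fix d' assume "d' \<in> shift_diags S"
  then obtain i j where "d' = {Suc i, Suc j}" "1 \<le> i" "i + 2 \<le> j" "j \<le> m"
    by (rule shift_diags_cases[OF assms])
  then show "d' \<in> Diag (Suc m)"
    using doubleton_in_Diag[of "Suc i" "Suc j" "Suc m"] by simp
qed

lemma noncrossing_shift_diags:
  assumes "m \<ge> 3" "S \<subseteq> Diag m" "noncrossing S"
  shows "noncrossing (shift_diags S)"
  unfolding noncrossing_def
proof (intro ballI)
  fix d d' assume "d \<in> shift_diags S" "d' \<in> shift_diags S"
  then obtain i j i' j' where
    d: "d = {Suc i, Suc j}" "{i, j} \<in> S" "i < j" and
    d': "d' = {Suc i', Suc j'}" "{i', j'} \<in> S" "i' < j'"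
    by (elim shift_diags_cases[OF assms(1,2)]) auto
  have "\<not> crosses {i, j} {i', j'}"
    using assms(3) d(2) d'(2) unfolding noncrossing_def by blast
  then show "\<not> crosses d d'"
    using d d' by (simp add: crosses_iff)
qed

text \<open>Contracting the side \<open>{1, 2}\<close> of the \<open>(m+1)\<close>-gon undoes the shift on the vertices
  \<open>2, \<dots>, m+1\<close>.\<close>

definition contract :: "nat \<Rightarrow> nat" where
  "contract x = (if x \<le> 2 then 1 else x - 1)"

lemma swap_diag_contract:
  assumes "1 \<le> i" "i < j" "1 \<le> p" "p + 2 \<le> q"
    and "swap_diag (Suc m) {Suc i, Suc j} {p, q}"
  shows "swap_diag m {i, j} {contract p, contract q}"
proof -
  have "contract p < contract q"
    unfolding contract_def using assms(3,4) by auto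
  then show ?thesis
    using assms by (auto simp: swap_diag_iff crosses_iff contract_def split: if_splits)
qed

lemma swap_target_contract:
  assumes "m \<ge> 3" "S \<subseteq> Diag m" "e \<in> Diag (Suc m)"
    and "swap_target (Suc m) (shift_diags S) e"
  shows "swap_target m S (contract ` e)"
  unfolding swap_target_def
proof
  fix d assume "d \<in> S"
  then have "d \<in> Diag m"
    using assms(2) by blast
  then obtain i j where d: "d = {i, j}" "1 \<le> i" "i + 2 \<le> j"
    by (rule Diag_cases[OF assms(1)]) auto
  obtain p q where e: "e = {p, q}" "1 \<le> p" "p + 2 \<le> q"
    by (rule Diag_cases[OF _ assms(3)]) (use assms(1) in auto)
  have "swap_diag (Suc m) {Suc i, Suc j} {p, q}"
    using assms(4) doubleton_in_shift_diags[of i j S] \<open>d \<in> S\<close> d(1) e(1)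
    unfolding swap_target_def by blast
  then show "swap_diag m d (contract ` e)"
    using swap_diag_contract[of i j p q m] d e by simp
qed

lemma contract_in_Diag:
  assumes "m \<ge> 3" "e \<in> Diag (Suc m)" "e \<noteq> {1, 3}" "e \<noteq> {2, Suc m}"
  shows "contract ` e \<in> Diag m"
proof -
  obtain p q where e: "e = {p, q}" "1 \<le> p" "p + 2 \<le> q" "q \<le> Suc m" "\<not> (p = 1 \<and> q = Suc m)"
    by (rule Diag_cases[OF _ assms(2)]) (use assms(1) in auto)
  have "{contract p, contract q} \<in> Diag m"
    using e assms(3,4) by (intro doubleton_in_Diag) (auto simp: contract_def)
  then show ?thesis
    using e(1) by simp
qed

lemma no_common_swap_target_shift:
  assumes "m \<ge> 3" "S1 \<in> triangulations m" "S2 \<in> triangulations m" "swap_blocked m S1 S2"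
    and "shift_diags S1 \<subseteq> X1" "shift_diags S2 \<subseteq> X2"
    and "e \<in> Diag (Suc m)" "e \<noteq> {1, 3}" "e \<noteq> {2, Suc m}"
    and "swap_target (Suc m) X1 e" "swap_target (Suc m) X2 e"
  shows False
proof -
  have "swap_target m S1 (contract ` e)" "swap_target m S2 (contract ` e)"
    using assms triangulationsD(1) swap_target_antimono swap_target_contract by metis+
  moreover have "contract ` e \<in> Diag m"
    using assms(1,7-9) by (rule contract_in_Diag)
  ultimately show False
    using assms(4) unfolding swap_blocked_def by blast
qed

lemma doubleton_2_m_if_swap_target_1_3:
  assumes "m \<ge> 4" "S \<in> triangulations m" "swap_target (Suc m) (shift_diags S) {1, 3}"
  shows "{2, m} \<in> S"
proof (rule doubleton_2_n_in_triangulation[OF assms(1,2)])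
  fix x assume x: "3 \<le> x" "x < m"
  show "{1, x} \<notin> S"
  proof
    assume "{1, x} \<in> S"
    then have "swap_diag (Suc m) {2, Suc x} {1, 3}"
      using assms(3) doubleton_in_shift_diags[of 1 x S] unfolding swap_target_def
      by (simp add: numeral_2_eq_2)
    moreover have "\<not> swap_diag (Suc m) {2, Suc x} {1, 3}"
      using x by (simp add: swap_diag_iff crosses_iff)
    ultimately show False
      by contradiction
  qed
qed

text \<open>The vertex \<open>first_neighbour (shift_diags S) (Suc m) 3 m\<close> is the apex of the triangle of
  \<open>shift_diags S\<close> on the side \<open>{2, m+1}\<close>, beyond which the new vertex \<open>1\<close> is inserted.\<close>

definition apex_extension :: "nat \<Rightarrow> nat set set \<Rightarrow> nat set set" where
  "apex_extension m S = insert {1, first_neighbour (shift_diags S) (Suc m) 3 m} (shift_diags S)"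

definition ear_extension :: "nat \<Rightarrow> nat set set \<Rightarrow> nat set set" where
  "ear_extension m S = insert {2, Suc m} (shift_diags S)"

definition fan :: "nat \<Rightarrow> nat set set" where
  "fan m = {{1, x} | x. 3 \<le> x \<and> x \<le> m}"

lemma apex_extension_noncrossing:
  assumes "m \<ge> 3" "S \<in> triangulations m"
  shows "apex_extension m S \<subseteq> Diag (Suc m)" "noncrossing (apex_extension m S)"
proof -
  let ?a = "first_neighbour (shift_diags S) (Suc m) 3 m"
  have a: "3 \<le> ?a" "?a \<le> m"
    using first_neighbour_bounds assms(1) by blast+
  have S: "S \<subseteq> Diag m" "noncrossing S"
    using triangulationsD[OF assms(2)] by auto
  have "{1, ?a} \<in> Diag (Suc m)"
    using a by (intro doubleton_in_Diag) auto
  then show "apex_extension m S \<subseteq> Diag (Suc m)"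
    unfolding apex_extension_def using shift_diags_subset_Diag[OF assms(1) S(1)] by blast
  have nc: "noncrossing (shift_diags S)"
    using noncrossing_shift_diags[OF assms(1) S] .
  show "noncrossing (apex_extension m S)"
    unfolding apex_extension_def
  proof (rule noncrossing_insert[OF nc])
    fix d assume d_mem: "d \<in> shift_diags S"
    then obtain i j where d: "d = {Suc i, Suc j}" "1 \<le> i" "i + 2 \<le> j" "j \<le> m"
      "\<not> (i = 1 \<and> j = m)"
      by (rule shift_diags_cases[OF assms(1) S(1)])
    show "\<not> crosses {1, ?a} d"
    proof
      assume "crosses {1, ?a} d"
      then have between: "Suc i < ?a" "?a < Suc j"
        using d a by (auto simp: crosses_iff)
      show False
      proof (cases "j = m")
        case True
        then show False
          using first_neighbour_least[of 3 "Suc i" "shift_diags S" "Suc m" m] d_mem d between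
          by (auto simp: insert_commute)
      next
        case False
        then have "{Suc m, ?a} \<in> shift_diags S"
          using first_neighbour_mem[of 3 m "shift_diags S" "Suc m"] assms(1) between d(4) by simp
        moreover have "crosses d {?a, Suc m}"
          using d between False by (auto simp: crosses_iff)
        ultimately show False
          using nc d_mem unfolding noncrossing_def by (metis insert_commute)
      qed
    qed
  qed
qed

lemma ear_extension_noncrossing:
  assumes "m \<ge> 3" "S \<in> triangulations m"
  shows "ear_extension m S \<subseteq> Diag (Suc m)" "noncrossing (ear_extension m S)"
proof -
  have S: "S \<subseteq> Diag m" "noncrossing S"
    using triangulationsD[OF assms(2)] by auto
  have "{2, Suc m} \<in> Diag (Suc m)"
    using assms(1) by (intro doubleton_in_Diag) auto
  then show "ear_extension m S \<subseteq> Diag (Suc m)"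
    unfolding ear_extension_def using shift_diags_subset_Diag[OF assms(1) S(1)] by blast
  show "noncrossing (ear_extension m S)"
    unfolding ear_extension_def
  proof (rule noncrossing_insert[OF noncrossing_shift_diags[OF assms(1) S]])
    fix d assume "d \<in> shift_diags S"
    then obtain i j where "d = {Suc i, Suc j}" "1 \<le> i" "i + 2 \<le> j" "j \<le> m"
      by (rule shift_diags_cases[OF assms(1) S(1)])
    then show "\<not> crosses {2, Suc m} d"
      by (auto simp: crosses_iff)
  qed
qed

lemma fan_noncrossing:
  assumes "m \<ge> 3"
  shows "fan m \<subseteq> Diag (Suc m)" "noncrossing (fan m)"
proof -
  show "fan m \<subseteq> Diag (Suc m)"
    unfolding fan_def by (auto intro: doubleton_in_Diag)
  show "noncrossing (fan m)"
    unfolding noncrossing_def fan_def by (auto simp: crosses_iff)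
qed

lemma apex_extension_blocks:
  assumes "m \<ge> 3"
  shows "\<not> swap_target (Suc m) (apex_extension m S) {2, Suc m}"
proof -
  let ?a = "first_neighbour (shift_diags S) (Suc m) 3 m"
  have a: "3 \<le> ?a" "?a \<le> m"
    using first_neighbour_bounds assms by blast+
  then have "\<not> swap_diag (Suc m) {1, ?a} {2, Suc m}"
    by (intro not_swap_diag_if_crosses) (auto simp: crosses_iff)
  then show ?thesis
    unfolding swap_target_def apex_extension_def by blast
qed

lemma ear_extension_blocks:
  assumes "m \<ge> 3" "e \<in> Diag (Suc m)" "1 \<in> e"
  shows "\<not> swap_target (Suc m) (ear_extension m S) e"
proof -
  obtain p q where e: "e = {p, q}" "1 \<le> p" "p + 2 \<le> q" "q \<le> Suc m" "\<not> (p = 1 \<and> q = Suc m)"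
    by (rule Diag_cases[OF _ assms(2)]) (use assms(1) in auto)
  then have "p = 1" "q < Suc m"
    using assms(3) by auto
  then have "crosses {2, Suc m} {p, q}"
    using e by (simp add: crosses_iff)
  then have "\<not> swap_diag (Suc m) {2, Suc m} e"
    unfolding e(1) by (rule not_swap_diag_if_crosses) (use e(3) \<open>q < Suc m\<close> in auto)
  then show ?thesis
    unfolding swap_target_def ear_extension_def by blast
qed

lemma fan_blocks:
  assumes "m \<ge> 3" "e \<in> Diag (Suc m)" "1 \<notin> e"
  shows "\<not> swap_target (Suc m) (fan m) e"
proof -
  obtain p q where e: "e = {p, q}" "1 \<le> p" "p + 2 \<le> q" "q \<le> Suc m"
    by (rule Diag_cases[OF _ assms(2)]) (use assms(1) in auto)
  then have "2 \<le> p"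
    using assms(3) by (cases "p = 1") auto
  then have "crosses {1, Suc p} {p, q}"
    using e by (simp add: crosses_iff)
  then have "\<not> swap_diag (Suc m) {1, Suc p} e"
    unfolding e(1) by (rule not_swap_diag_if_crosses) (use \<open>2 \<le> p\<close> e(3) in auto)
  moreover have "{1, Suc p} \<in> fan m"
    using \<open>2 \<le> p\<close> e unfolding fan_def by auto
  ultimately show ?thesis
    unfolding swap_target_def by blast
qed

lemma swap_blocked_apex_apex:
  assumes "m \<ge> 3" "S1 \<in> triangulations m" "S2 \<in> triangulations m" "swap_blocked m S1 S2"
    and "T1 \<in> triangulations (Suc m)" "apex_extension m S1 \<subseteq> T1" "apex_extension m S2 \<subseteq> T2"
  shows "swap_blocked (Suc m) T1 T2"
proof (rule swap_blockedI)
  show "Suc m \<ge> 4"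
    using assms(1) by simp
  fix e assume e: "e \<in> Diag (Suc m)" "swap_target (Suc m) T1 e" "swap_target (Suc m) T2 e"
  then have targets: "swap_target (Suc m) (apex_extension m S1) e"
    "swap_target (Suc m) (apex_extension m S2) e"
    using assms(6,7) swap_target_antimono by blast+
  have shift: "shift_diags S1 \<subseteq> apex_extension m S1" "shift_diags S2 \<subseteq> apex_extension m S2"
    unfolding apex_extension_def by auto
  consider "e = {1, 3}" | "e = {2, Suc m}" | "e \<noteq> {1, 3}" "e \<noteq> {2, Suc m}"
    by blast
  then show False
  proof cases
    case 1
    have "m \<noteq> 3"
      using assms(2-4) triangulations_3 unfolding swap_blocked_def by blast
    moreover have "swap_target (Suc m) (shift_diags S1) {1, 3}"
      "swap_target (Suc m) (shift_diags S2) {1, 3}"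
      using swap_target_antimono[OF shift(1) targets(1)]
        swap_target_antimono[OF shift(2) targets(2)] 1
      by simp_all
    ultimately have "{2, m} \<in> S1" "{2, m} \<in> S2"
      using doubleton_2_m_if_swap_target_1_3 assms(1-3) by simp_all
    moreover have "{2, m} \<in> Diag m"
      using \<open>{2, m} \<in> S1\<close> triangulationsD(1)[OF assms(2)] by blast
    ultimately show False
      using assms(4) swap_target_if_mem triangulationsD(2) assms(2,3)
      unfolding swap_blocked_def by blast
  next
    case 2
    then show False
      using apex_extension_blocks[OF assms(1)] targets(1) by simp
  next
    case 3
    show False
      by (rule no_common_swap_target_shift[OF assms(1-4) shift e(1) 3 targets])
  qed
qed (rule assms(5))

lemma swap_blocked_apex_ear:
  assumes "m \<ge> 3" "S1 \<in> triangulations m" "S2 \<in> triangulations m" "swap_blocked m S1 S2"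
    and "T1 \<in> triangulations (Suc m)" "apex_extension m S1 \<subseteq> T1" "ear_extension m S2 \<subseteq> T2"
  shows "swap_blocked (Suc m) T1 T2"
proof (rule swap_blockedI)
  show "Suc m \<ge> 4"
    using assms(1) by simp
  fix e assume e: "e \<in> Diag (Suc m)" "swap_target (Suc m) T1 e" "swap_target (Suc m) T2 e"
  then have targets: "swap_target (Suc m) (apex_extension m S1) e"
    "swap_target (Suc m) (ear_extension m S2) e"
    using assms(6,7) swap_target_antimono by blast+
  have shift: "shift_diags S1 \<subseteq> apex_extension m S1" "shift_diags S2 \<subseteq> ear_extension m S2"
    unfolding apex_extension_def ear_extension_def by auto
  consider "1 \<in> e" | "e = {2, Suc m}" | "1 \<notin> e" "e \<noteq> {2, Suc m}"
    by blast
  then show False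
  proof cases
    case 1
    then show False
      using ear_extension_blocks[OF assms(1) e(1)] targets(2) by blast
  next
    case 2
    then show False
      using apex_extension_blocks[OF assms(1)] targets(1) by simp
  next
    case 3
    then have "e \<noteq> {1, 3}"
      by blast
    then show False
      using no_common_swap_target_shift[OF assms(1-4) shift e(1) _ 3(2) targets] by blast
  qed
qed (rule assms(5))

lemma swap_blocked_ear_fan:
  assumes "m \<ge> 3" "T1 \<in> triangulations (Suc m)" "ear_extension m S \<subseteq> T1" "fan m \<subseteq> T2"
  shows "swap_blocked (Suc m) T1 T2"
proof (rule swap_blockedI)
  show "Suc m \<ge> 4"
    using assms(1) by simp
  fix e assume e: "e \<in> Diag (Suc m)" "swap_target (Suc m) T1 e" "swap_target (Suc m) T2 e"
  then have "swap_target (Suc m) (ear_extension m S) e" "swap_target (Suc m) (fan m) e"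
    using assms(3,4) swap_target_antimono by blast+
  then show False
    using ear_extension_blocks[OF assms(1) e(1)] fan_blocks[OF assms(1) e(1)] by blast
qed (rule assms(2))

lemma colorable_swap_blocked_Suc:
  assumes "m \<ge> 3" "colorable (swap_blocked (Suc m)) (triangulations (Suc m)) k"
  shows "colorable (swap_blocked m) (triangulations m) (k - 1)"
proof -
  have "\<exists>T. T \<in> triangulations (Suc m) \<and> apex_extension m S \<subseteq> T" if "S \<in> triangulations m" for S
    using noncrossing_extends_to_triangulation apex_extension_noncrossing[OF assms(1) that] by metis
  then obtain v where v: "\<And>S. S \<in> triangulations m \<Longrightarrow>
      v S \<in> triangulations (Suc m) \<and> apex_extension m S \<subseteq> v S"
    by metis
  have "\<exists>T. T \<in> triangulations (Suc m) \<and> ear_extension m S \<subseteq> T" if "S \<in> triangulations m" for S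
    using noncrossing_extends_to_triangulation ear_extension_noncrossing[OF assms(1) that] by metis
  then obtain s where s: "\<And>S. S \<in> triangulations m \<Longrightarrow>
      s S \<in> triangulations (Suc m) \<and> ear_extension m S \<subseteq> s S"
    by metis
  obtain w where w: "w \<in> triangulations (Suc m)" "fan m \<subseteq> w"
    using noncrossing_extends_to_triangulation fan_noncrossing[OF assms(1)] by metis
  show ?thesis
  proof (rule colorable_minus_one[OF assms(2)])
    show "v ` triangulations m \<subseteq> triangulations (Suc m)"
      "s ` triangulations m \<subseteq> triangulations (Suc m)"
      using v s by blast+
    show "w \<in> triangulations (Suc m)"
      by (rule w(1))
    show "swap_blocked (Suc m) (v S1) (v S2)" "swap_blocked (Suc m) (v S1) (s S2)"
      if "S1 \<in> triangulations m" "S2 \<in> triangulations m" "swap_blocked m S1 S2" for S1 S2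
      using swap_blocked_apex_apex[OF assms(1) that] swap_blocked_apex_ear[OF assms(1) that]
        v[OF that(1)] v[OF that(2)] s[OF that(2)] by blast+
    show "swap_blocked (Suc m) (s S) w" if "S \<in> triangulations m" for S
      using swap_blocked_ear_fan[OF assms(1)] s[OF that] w(2) by blast
  qed (rule swap_blocked_sym)
qed

lemma colorable_swap_blocked_ge:
  assumes "m \<ge> 3" "colorable (swap_blocked m) (triangulations m) k"
  shows "m - 2 \<le> k"
  using assms
proof (induction m arbitrary: k rule: nat_induct_at_least)
  case base
  then show ?case
    using colorable_pos triangulations_nonempty by fastforce
next
  case (Suc m)
  then have "m - 2 \<le> k - 1"
    using colorable_swap_blocked_Suc by blast
  then show ?case
    using Suc.hyps by linarith
qed

theorem lemma3p3:
  fixes n :: nat and Tp :: "nat set set set"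
  assumes "n \<ge> 3"
    and "Tp \<subseteq> triangulations n"
    and "\<forall>T\<in>triangulations n. \<exists>T'\<in>Tp. swap_triang n T T'"
  shows "chromatic_number_KG Tp = n - 2"
proof -
  have upper: "proper_coloring Tp (\<lambda>T. first_neighbour T 1 3 n - 3) (n - 2)"
    using assms(1,2) by (rule proper_coloring_first_neighbour)
  obtain f where f: "\<And>T. T \<in> triangulations n \<Longrightarrow> f T \<in> Tp \<and> swap_triang n T (f T)"
    using assms(3) by metis
  have lower: "n - 2 \<le> k" if "proper_coloring Tp c k" for c k
  proof -
    have "colorable (swap_blocked n) (triangulations n) k"
    proof (rule colorable_pullback)
      show "colorable (KG_adj Tp) Tp k"
        using that by (rule colorable_if_proper_coloring)
      show "f ` triangulations n \<subseteq> Tp"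
        using f by blast
      show "KG_adj Tp (f T1) (f T2)"
        if "T1 \<in> triangulations n" "T2 \<in> triangulations n" "swap_blocked n T1 T2" for T1 T2
        using KG_adj_if_swap_blocked[OF assms(1,2) that] f that(1,2) by blast
    qed
    then show ?thesis
      using assms(1) colorable_swap_blocked_ge by blast
  qed
  show ?thesis
    unfolding chromatic_number_KG_def by (rule Least_equality) (use upper lower in blast)+
qed

end
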